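(* Let $\mathcal{C}$ be a deflation-exact category and $\mathcal{A}$ an admissibly deflation-percolating subcategory. Let $f\colon X\to Y$ be an admissible morphism whose kernel and cokernel lie in $\mathcal{A}$, and let $g\colon X\to A$ be any morphism with $A\in\mathcal{A}$. Then the pushout of $f$ along $g$ exists, and the induced morphism $A\to P$ (where $P$ is the pushout) is admissible with kernel and cokernel in $\mathcal{A}$.
   Context: A conflation category is an additive category with a class of kernel-cokernel pairs (closed under isomorphisms) called conflations; first map an inflation, second a deflation. A deflation-exact category is a conflation category satisfying: (R0) $1_0$ is a deflation; (R1) composites of deflations are deflations; (R2) pullbacks of deflations along arbitrary morphisms exist and are deflations. A morphism is admissible if it factors as a deflation followed by an inflation. A non-empty full subcategory $\mathcal{A}$ is admissibly deflation-percolating if: (A1) for every conflation $A'\rightarrowtail A\twoheadrightarrow A''$, $A\in\mathcal{A}$ iff $A',A''\in\mathcal{A}$; (A2) every morphism $C\to A$ with $A\in\mathcal{A}$ factors as a deflation $C\twoheadrightarrow A'$ followed by an inflation $A'\rightarrowtail A$ with $A'\in\mathcal{A}$; (A3) if $a\colon C\rightarrowtail D$ is an inflation and $b\colon C\twoheadrightarrow A$ a deflation with $A\in\mathcal{A}$, the pushout of $a$ along $b$ exists and yields a deflation $D\twoheadrightarrow P$ and an inflation $A\rightarrowtail P$. *)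

theory Defs
  imports Main
begin

record ('o, 'm) cat =
  ob  :: "'o set"
  ar  :: "'m set"
  dm  :: "'m \<Rightarrow> 'o"
  cd  :: "'m \<Rightarrow> 'o"
  cp  :: "'m \<Rightarrow> 'm \<Rightarrow> 'm"    \<comment> \<open>cp g f = g \<circ> f\<close>
  idt :: "'o \<Rightarrow> 'm"
  zr  :: "'o \<Rightarrow> 'o \<Rightarrow> 'm"
  ad  :: "'m \<Rightarrow> 'm \<Rightarrow> 'm"
  ng  :: "'m \<Rightarrow> 'm"

definition hom :: "('o, 'm, 'x) cat_scheme \<Rightarrow> 'o \<Rightarrow> 'o \<Rightarrow> 'm set" where
  "hom C X Y = {f \<in> ar C. dm C f = X \<and> cd C f = Y}"

definition is_category :: "('o, 'm, 'x) cat_scheme \<Rightarrow> bool" where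
  "is_category C \<longleftrightarrow>
     (\<forall>f \<in> ar C. dm C f \<in> ob C \<and> cd C f \<in> ob C) \<and>
     (\<forall>X \<in> ob C. idt C X \<in> hom C X X) \<and>
     (\<forall>X \<in> ob C. \<forall>Y \<in> ob C. \<forall>Z \<in> ob C. \<forall>f \<in> hom C X Y. \<forall>g \<in> hom C Y Z.
         cp C g f \<in> hom C X Z) \<and>
     (\<forall>f \<in> ar C. cp C (idt C (cd C f)) f = f \<and> cp C f (idt C (dm C f)) = f) \<and>
     (\<forall>f \<in> ar C. \<forall>g \<in> ar C. \<forall>h \<in> ar C. cd C f = dm C g \<and> cd C g = dm C h \<longrightarrow>
         cp C h (cp C g f) = cp C (cp C h g) f)"

definition is_preadditive :: "('o, 'm, 'x) cat_scheme \<Rightarrow> bool" where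
  "is_preadditive C \<longleftrightarrow> is_category C \<and>
     (\<forall>X \<in> ob C. \<forall>Y \<in> ob C.
        zr C X Y \<in> hom C X Y \<and>
        (\<forall>f \<in> hom C X Y. \<forall>g \<in> hom C X Y. ad C f g \<in> hom C X Y) \<and>
        (\<forall>f \<in> hom C X Y. ng C f \<in> hom C X Y) \<and>
        (\<forall>f \<in> hom C X Y. \<forall>g \<in> hom C X Y. \<forall>h \<in> hom C X Y.
            ad C (ad C f g) h = ad C f (ad C g h)) \<and>
        (\<forall>f \<in> hom C X Y. \<forall>g \<in> hom C X Y. ad C f g = ad C g f) \<and>
        (\<forall>f \<in> hom C X Y. ad C f (zr C X Y) = f) \<and>
        (\<forall>f \<in> hom C X Y. ad C f (ng C f) = zr C X Y)) \<and>
     (\<forall>X \<in> ob C. \<forall>Y \<in> ob C. \<forall>Z \<in> ob C. \<forall>f \<in> hom C X Y. \<forall>g \<in> hom C X Y. \<forall>h \<in> hom C Y Z.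
        cp C h (ad C f g) = ad C (cp C h f) (cp C h g)) \<and>
     (\<forall>X \<in> ob C. \<forall>Y \<in> ob C. \<forall>Z \<in> ob C. \<forall>h \<in> hom C X Y. \<forall>f \<in> hom C Y Z. \<forall>g \<in> hom C Y Z.
        cp C (ad C f g) h = ad C (cp C f h) (cp C g h))"

definition is_zero_object :: "('o, 'm, 'x) cat_scheme \<Rightarrow> 'o \<Rightarrow> bool" where
  "is_zero_object C Z \<longleftrightarrow> Z \<in> ob C \<and>
     (\<forall>X \<in> ob C. (\<exists>!f. f \<in> hom C Z X) \<and> (\<exists>!f. f \<in> hom C X Z))"

definition has_biproducts :: "('o, 'm, 'x) cat_scheme \<Rightarrow> bool" where
  "has_biproducts C \<longleftrightarrow>
     (\<forall>X1 \<in> ob C. \<forall>X2 \<in> ob C. \<exists>S \<in> ob C. \<exists>i1 \<in> hom C X1 S. \<exists>i2 \<in> hom C X2 S.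
        \<exists>p1 \<in> hom C S X1. \<exists>p2 \<in> hom C S X2.
          cp C p1 i1 = idt C X1 \<and> cp C p2 i2 = idt C X2 \<and>
          cp C p1 i2 = zr C X2 X1 \<and> cp C p2 i1 = zr C X1 X2 \<and>
          ad C (cp C i1 p1) (cp C i2 p2) = idt C S)"

definition is_additive :: "('o, 'm, 'x) cat_scheme \<Rightarrow> bool" where
  "is_additive C \<longleftrightarrow> is_preadditive C \<and> (\<exists>Z. is_zero_object C Z) \<and> has_biproducts C"

definition is_iso :: "('o, 'm, 'x) cat_scheme \<Rightarrow> 'm \<Rightarrow> bool" where
  "is_iso C f \<longleftrightarrow> f \<in> ar C \<and>
     (\<exists>g \<in> hom C (cd C f) (dm C f). cp C g f = idt C (dm C f) \<and> cp C f g = idt C (cd C f))"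

definition is_kernel :: "('o, 'm, 'x) cat_scheme \<Rightarrow> 'm \<Rightarrow> 'm \<Rightarrow> bool" where
  "is_kernel C k f \<longleftrightarrow> k \<in> ar C \<and> f \<in> ar C \<and> cd C k = dm C f \<and>
     cp C f k = zr C (dm C k) (cd C f) \<and>
     (\<forall>t \<in> ar C. cd C t = dm C f \<and> cp C f t = zr C (dm C t) (cd C f) \<longrightarrow>
        (\<exists>!u. u \<in> hom C (dm C t) (dm C k) \<and> cp C k u = t))"

definition is_cokernel :: "('o, 'm, 'x) cat_scheme \<Rightarrow> 'm \<Rightarrow> 'm \<Rightarrow> bool" where
  "is_cokernel C c f \<longleftrightarrow> c \<in> ar C \<and> f \<in> ar C \<and> dm C c = cd C f \<and>
     cp C c f = zr C (dm C f) (cd C c) \<and>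
     (\<forall>t \<in> ar C. dm C t = cd C f \<and> cp C t f = zr C (dm C f) (cd C t) \<longrightarrow>
        (\<exists>!u. u \<in> hom C (cd C c) (cd C t) \<and> cp C u c = t))"

definition is_kernel_cokernel_pair :: "('o, 'm, 'x) cat_scheme \<Rightarrow> 'm \<Rightarrow> 'm \<Rightarrow> bool" where
  "is_kernel_cokernel_pair C i p \<longleftrightarrow> is_kernel C i p \<and> is_cokernel C p i"

definition conflation_category :: "('o, 'm, 'x) cat_scheme \<Rightarrow> ('m \<times> 'm) set \<Rightarrow> bool" where
  "conflation_category C E \<longleftrightarrow> is_additive C \<and>
     (\<forall>(i, p) \<in> E. is_kernel_cokernel_pair C i p) \<and>
     (\<forall>(i, p) \<in> E. \<forall>i' \<in> ar C. \<forall>p' \<in> ar C. \<forall>a b c.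
        cd C i' = dm C p' \<and>
        is_iso C a \<and> dm C a = dm C i \<and> cd C a = dm C i' \<and>
        is_iso C b \<and> dm C b = cd C i \<and> cd C b = cd C i' \<and>
        is_iso C c \<and> dm C c = cd C p \<and> cd C c = cd C p' \<and>
        cp C i' a = cp C b i \<and> cp C p' b = cp C c p \<longrightarrow> (i', p') \<in> E)"

definition inflation :: "('m \<times> 'm) set \<Rightarrow> 'm \<Rightarrow> bool" where
  "inflation E i \<longleftrightarrow> (\<exists>p. (i, p) \<in> E)"

definition deflation :: "('m \<times> 'm) set \<Rightarrow> 'm \<Rightarrow> bool" where
  "deflation E p \<longleftrightarrow> (\<exists>i. (i, p) \<in> E)"

definition is_pullback :: "('o, 'm, 'x) cat_scheme \<Rightarrow> 'm \<Rightarrow> 'm \<Rightarrow> 'o \<Rightarrow> 'm \<Rightarrow> 'm \<Rightarrow> bool" where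
  "is_pullback C p f P p' f' \<longleftrightarrow> p \<in> ar C \<and> f \<in> ar C \<and> cd C p = cd C f \<and> P \<in> ob C \<and>
     p' \<in> hom C P (dm C f) \<and> f' \<in> hom C P (dm C p) \<and> cp C p f' = cp C f p' \<and>
     (\<forall>Z \<in> ob C. \<forall>u \<in> hom C Z (dm C f). \<forall>v \<in> hom C Z (dm C p).
        cp C p v = cp C f u \<longrightarrow> (\<exists>!w. w \<in> hom C Z P \<and> cp C p' w = u \<and> cp C f' w = v))"

text \<open>Pushout of f along g (same domain): object P with f' : cod g \<rightarrow> P,
  g' : cod f \<rightarrow> P, f' \<circ> g = g' \<circ> f, universal. f' is the induced morphism.\<close>
definition is_pushout :: "('o, 'm, 'x) cat_scheme \<Rightarrow> 'm \<Rightarrow> 'm \<Rightarrow> 'o \<Rightarrow> 'm \<Rightarrow> 'm \<Rightarrow> bool" where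
  "is_pushout C f g P f' g' \<longleftrightarrow> f \<in> ar C \<and> g \<in> ar C \<and> dm C f = dm C g \<and> P \<in> ob C \<and>
     f' \<in> hom C (cd C g) P \<and> g' \<in> hom C (cd C f) P \<and> cp C f' g = cp C g' f \<and>
     (\<forall>Z \<in> ob C. \<forall>u \<in> hom C (cd C g) Z. \<forall>v \<in> hom C (cd C f) Z.
        cp C u g = cp C v f \<longrightarrow> (\<exists>!w. w \<in> hom C P Z \<and> cp C w f' = u \<and> cp C w g' = v))"

definition deflation_exact :: "('o, 'm, 'x) cat_scheme \<Rightarrow> ('m \<times> 'm) set \<Rightarrow> bool" where
  "deflation_exact C E \<longleftrightarrow> conflation_category C E \<and>
     \<comment> \<open>R0\<close>
     (\<exists>Z. is_zero_object C Z \<and> deflation E (idt C Z)) \<and>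
     \<comment> \<open>R1\<close>
     (\<forall>p q. deflation E p \<and> deflation E q \<and> cd C p = dm C q \<longrightarrow> deflation E (cp C q p)) \<and>
     \<comment> \<open>R2\<close>
     (\<forall>p f. deflation E p \<and> f \<in> ar C \<and> cd C f = cd C p \<longrightarrow>
        (\<exists>P p' f'. is_pullback C p f P p' f' \<and> deflation E p'))"

definition admissible :: "('o, 'm, 'x) cat_scheme \<Rightarrow> ('m \<times> 'm) set \<Rightarrow> 'm \<Rightarrow> bool" where
  "admissible C E f \<longleftrightarrow> (\<exists>p i. deflation E p \<and> inflation E i \<and> cd C p = dm C i \<and> f = cp C i p)"

definition kernel_in :: "('o, 'm, 'x) cat_scheme \<Rightarrow> 'o set \<Rightarrow> 'm \<Rightarrow> bool" where
  "kernel_in C A f \<longleftrightarrow> (\<exists>k. is_kernel C k f \<and> dm C k \<in> A)"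

definition cokernel_in :: "('o, 'm, 'x) cat_scheme \<Rightarrow> 'o set \<Rightarrow> 'm \<Rightarrow> bool" where
  "cokernel_in C A f \<longleftrightarrow> (\<exists>c. is_cokernel C c f \<and> cd C c \<in> A)"

text \<open>Admissibly deflation-percolating subcategory, given by its (non-empty) set of objects
  (full subcategory).\<close>
definition adm_defl_percolating :: "('o, 'm, 'x) cat_scheme \<Rightarrow> ('m \<times> 'm) set \<Rightarrow> 'o set \<Rightarrow> bool" where
  "adm_defl_percolating C E A \<longleftrightarrow> A \<subseteq> ob C \<and> A \<noteq> {} \<and>
     \<comment> \<open>A1\<close>
     (\<forall>(i, p) \<in> E. cd C i \<in> A \<longleftrightarrow> dm C i \<in> A \<and> cd C p \<in> A) \<and>
     \<comment> \<open>A2\<close>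
     (\<forall>c \<in> ar C. cd C c \<in> A \<longrightarrow>
        (\<exists>p i. deflation E p \<and> inflation E i \<and> cd C p = dm C i \<and> dm C i \<in> A \<and> c = cp C i p)) \<and>
     \<comment> \<open>A3\<close>
     (\<forall>a b. inflation E a \<and> deflation E b \<and> dm C a = dm C b \<and> cd C b \<in> A \<longrightarrow>
        (\<exists>P b' a'. is_pushout C a b P b' a' \<and> deflation E a' \<and> inflation E b'))"

end

theory Submission
  imports Defs
begin

(*
  Write f = i p with p a deflation and i an inflation. The pushout of f along g is obtained by
  pasting three pushouts: that of p along g, which is the cokernel of g k for k = ker p and so
  lies in A; that of i along d, where h = j d is the (A2)-factorisation of the induced map h,
  which exists by (A3) and lies in A because the cokernel of the new inflation is a cokernel of
  f; and that of j along that new inflation, which exists because both codomains lie in A, so the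
  cokernel of the corresponding map into their biproduct lies in A. Every pushout is isomorphic
  to this one, hence lies in A, and by (A2) and (A1) a morphism between objects of A is admissible
  with kernel and cokernel in A.
*)

definition isomorphic :: "('o, 'm, 'x) cat_scheme \<Rightarrow> 'o \<Rightarrow> 'o \<Rightarrow> bool" where
  "isomorphic C X Y \<longleftrightarrow> (\<exists>\<phi> \<in> hom C X Y. \<exists>\<psi> \<in> hom C Y X.
     cp C \<psi> \<phi> = idt C X \<and> cp C \<phi> \<psi> = idt C Y)"

definition is_biproduct ::
    "('o, 'm, 'x) cat_scheme \<Rightarrow> 'o \<Rightarrow> 'o \<Rightarrow> 'o \<Rightarrow> 'm \<Rightarrow> 'm \<Rightarrow> 'm \<Rightarrow> 'm \<Rightarrow> bool" where
  "is_biproduct C X1 X2 S i1 i2 p1 p2 \<longleftrightarrow>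
     i1 \<in> hom C X1 S \<and> i2 \<in> hom C X2 S \<and> p1 \<in> hom C S X1 \<and> p2 \<in> hom C S X2 \<and>
     cp C p1 i1 = idt C X1 \<and> cp C p2 i2 = idt C X2 \<and>
     cp C p1 i2 = zr C X2 X1 \<and> cp C p2 i1 = zr C X1 X2 \<and>
     ad C (cp C i1 p1) (cp C i2 p2) = idt C S"

locale preadditive_cat =
  fixes C :: "('o, 'm, 'x) cat_scheme"
  assumes preadditive: "is_preadditive C"
begin

abbreviation cmp (infixr "\<cdot>" 55) where "g \<cdot> f \<equiv> cp C g f"

lemma category: "is_category C"
  using preadditive unfolding is_preadditive_def by blast

lemma hom_ob: assumes "f \<in> hom C X Y" shows "X \<in> ob C" "Y \<in> ob C"
  using assms category unfolding is_category_def hom_def by auto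

lemma comp_hom [intro]:
  assumes "f \<in> hom C X Y" "g \<in> hom C Y Z" shows "g \<cdot> f \<in> hom C X Z"
  using category hom_ob[OF assms(1)] hom_ob(2)[OF assms(2)] assms unfolding is_category_def by blast

lemma comp_assoc:
  "f \<in> hom C X Y \<Longrightarrow> g \<in> hom C Y Z \<Longrightarrow> h \<in> hom C Z W \<Longrightarrow> h \<cdot> (g \<cdot> f) = (h \<cdot> g) \<cdot> f"
  using category unfolding is_category_def hom_def by auto

lemma id_hom [intro]: "X \<in> ob C \<Longrightarrow> idt C X \<in> hom C X X"
  using category unfolding is_category_def by auto

lemma id_left: "f \<in> hom C X Y \<Longrightarrow> idt C Y \<cdot> f = f"
  using category unfolding is_category_def hom_def by auto

lemma id_right: "f \<in> hom C X Y \<Longrightarrow> f \<cdot> idt C X = f"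
  using category unfolding is_category_def hom_def by auto

lemma is_isoI:
  assumes "\<phi> \<in> hom C X Y" "\<psi> \<in> hom C Y X" "\<psi> \<cdot> \<phi> = idt C X" "\<phi> \<cdot> \<psi> = idt C Y"
  shows "is_iso C \<phi>"
  using assms unfolding is_iso_def hom_def by auto

lemma hom_abelian_group:
  assumes "X \<in> ob C" "Y \<in> ob C"
  shows "zr C X Y \<in> hom C X Y \<and>
        (\<forall>f \<in> hom C X Y. \<forall>g \<in> hom C X Y. ad C f g \<in> hom C X Y) \<and>
        (\<forall>f \<in> hom C X Y. ng C f \<in> hom C X Y) \<and>
        (\<forall>f \<in> hom C X Y. \<forall>g \<in> hom C X Y. \<forall>h \<in> hom C X Y.
            ad C (ad C f g) h = ad C f (ad C g h)) \<and>
        (\<forall>f \<in> hom C X Y. \<forall>g \<in> hom C X Y. ad C f g = ad C g f) \<and>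
        (\<forall>f \<in> hom C X Y. ad C f (zr C X Y) = f) \<and>
        (\<forall>f \<in> hom C X Y. ad C f (ng C f) = zr C X Y)"
  using assms by (rule preadditive[unfolded is_preadditive_def, THEN conjunct2, THEN conjunct1,
      THEN bspec, THEN bspec])

lemma comp_add_left:
  assumes "f \<in> hom C X Y" "g \<in> hom C X Y" "h \<in> hom C Y Z"
  shows "h \<cdot> ad C f g = ad C (h \<cdot> f) (h \<cdot> g)"
proof -
  have "\<forall>f \<in> hom C X Y. \<forall>g \<in> hom C X Y. \<forall>h \<in> hom C Y Z. h \<cdot> ad C f g = ad C (h \<cdot> f) (h \<cdot> g)"
    using hom_ob(1)[OF assms(1)] hom_ob(2)[OF assms(1)] hom_ob(2)[OF assms(3)]
    by (rule preadditive[unfolded is_preadditive_def, THEN conjunct2, THEN conjunct2,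
      THEN conjunct1, THEN bspec, THEN bspec, THEN bspec])
  then show ?thesis using assms by blast
qed

lemma comp_add_right:
  assumes "h \<in> hom C X Y" "f \<in> hom C Y Z" "g \<in> hom C Y Z"
  shows "ad C f g \<cdot> h = ad C (f \<cdot> h) (g \<cdot> h)"
proof -
  have "\<forall>h \<in> hom C X Y. \<forall>f \<in> hom C Y Z. \<forall>g \<in> hom C Y Z. ad C f g \<cdot> h = ad C (f \<cdot> h) (g \<cdot> h)"
    using hom_ob(1)[OF assms(1)] hom_ob(2)[OF assms(1)] hom_ob(2)[OF assms(2)]
    by (rule preadditive[unfolded is_preadditive_def, THEN conjunct2, THEN conjunct2,
      THEN conjunct2, THEN bspec, THEN bspec, THEN bspec])
  then show ?thesis using assms by blast
qed

lemma zero_hom [intro]: "X \<in> ob C \<Longrightarrow> Y \<in> ob C \<Longrightarrow> zr C X Y \<in> hom C X Y"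
  using hom_abelian_group by blast

lemma add_hom [intro]: "f \<in> hom C X Y \<Longrightarrow> g \<in> hom C X Y \<Longrightarrow> ad C f g \<in> hom C X Y"
  using hom_abelian_group[OF hom_ob[of f X Y]] by blast

lemma neg_hom [intro]: "f \<in> hom C X Y \<Longrightarrow> ng C f \<in> hom C X Y"
  using hom_abelian_group[OF hom_ob[of f X Y]] by blast

lemma add_assoc:
  "f \<in> hom C X Y \<Longrightarrow> g \<in> hom C X Y \<Longrightarrow> h \<in> hom C X Y \<Longrightarrow>
   ad C (ad C f g) h = ad C f (ad C g h)"
  using hom_abelian_group[OF hom_ob[of f X Y]] by blast

lemma add_comm: "f \<in> hom C X Y \<Longrightarrow> g \<in> hom C X Y \<Longrightarrow> ad C f g = ad C g f"
  using hom_abelian_group[OF hom_ob[of f X Y]] by blast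

lemma add_zero: "f \<in> hom C X Y \<Longrightarrow> ad C f (zr C X Y) = f"
  using hom_abelian_group[OF hom_ob[of f X Y]] by blast

lemma add_neg: "f \<in> hom C X Y \<Longrightarrow> ad C f (ng C f) = zr C X Y"
  using hom_abelian_group[OF hom_ob[of f X Y]] by blast

lemma zero_add: "f \<in> hom C X Y \<Longrightarrow> ad C (zr C X Y) f = f"
  using add_comm[of f X Y "zr C X Y"] add_zero[of f X Y] hom_ob[of f X Y] zero_hom[of X Y] by simp

lemma add_right_cancel:
  assumes a: "a \<in> hom C X Y" and b: "b \<in> hom C X Y" and c: "c \<in> hom C X Y"
    and eq: "ad C a c = ad C b c"
  shows "a = b"
proof -
  have n: "ng C c \<in> hom C X Y" using c by blast
  have "a = ad C a (ad C c (ng C c))" using add_neg[OF c] add_zero[OF a] by simp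
  also have "\<dots> = ad C (ad C b c) (ng C c)" using add_assoc[OF a c n] eq by simp
  also have "\<dots> = b" using add_assoc[OF b c n] add_neg[OF c] add_zero[OF b] by simp
  finally show ?thesis .
qed

lemma add_self_eq:
  assumes "a \<in> hom C X Y" "ad C a a = a" shows "a = zr C X Y"
proof (rule add_right_cancel[OF assms(1) _ assms(1)])
  show "zr C X Y \<in> hom C X Y" using assms(1) hom_ob by blast
  show "ad C a a = ad C (zr C X Y) a" using assms zero_add by simp
qed

lemma comp_zero:
  assumes "h \<in> hom C Y Z" "X \<in> ob C" shows "h \<cdot> zr C X Y = zr C X Z"
proof (rule add_self_eq)
  have z: "zr C X Y \<in> hom C X Y" using assms hom_ob by blast
  then show "h \<cdot> zr C X Y \<in> hom C X Z" using assms by blast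
  show "ad C (h \<cdot> zr C X Y) (h \<cdot> zr C X Y) = h \<cdot> zr C X Y"
    using comp_add_left[OF z z assms(1)] add_zero[OF z] by simp
qed

lemma zero_comp:
  assumes "h \<in> hom C X Y" "Z \<in> ob C" shows "zr C Y Z \<cdot> h = zr C X Z"
proof (rule add_self_eq)
  have z: "zr C Y Z \<in> hom C Y Z" using assms hom_ob by blast
  then show "zr C Y Z \<cdot> h \<in> hom C X Z" using assms by blast
  show "ad C (zr C Y Z \<cdot> h) (zr C Y Z \<cdot> h) = zr C Y Z \<cdot> h"
    using comp_add_right[OF assms(1) z z] add_zero[OF z] by simp
qed

lemma kernelD:
  assumes "is_kernel C k f"
  shows "k \<in> hom C (dm C k) (dm C f)" "f \<in> hom C (dm C f) (cd C f)"
    "f \<cdot> k = zr C (dm C k) (cd C f)"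
  using assms by (simp_all add: is_kernel_def hom_def)

lemma kernel_lift:
  assumes "is_kernel C k f" "t \<in> hom C T (dm C f)" "f \<cdot> t = zr C T (cd C f)"
  shows "\<exists>!u. u \<in> hom C T (dm C k) \<and> k \<cdot> u = t"
proof -
  have t: "t \<in> ar C" "cd C t = dm C f" "dm C t = T" using assms(2) by (simp_all add: hom_def)
  have "\<forall>t \<in> ar C. cd C t = dm C f \<and> f \<cdot> t = zr C (dm C t) (cd C f) \<longrightarrow>
      (\<exists>!u. u \<in> hom C (dm C t) (dm C k) \<and> k \<cdot> u = t)"
    using assms(1) unfolding is_kernel_def by (elim conjE)
  from this[rule_format, OF t(1)] show ?thesis using t assms(3) by simp
qed

lemma kernel_mono:
  assumes k: "is_kernel C k f" and x: "x \<in> hom C T (dm C k)" and y: "y \<in> hom C T (dm C k)"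
    and eq: "k \<cdot> x = k \<cdot> y"
  shows "x = y"
proof -
  have kh: "k \<in> hom C (dm C k) (dm C f)" and fh: "f \<in> hom C (dm C f) (cd C f)"
    using k kernelD(1) kernelD(2) by blast+
  have "f \<cdot> (k \<cdot> x) = zr C (dm C k) (cd C f) \<cdot> x"
    using comp_assoc[OF x kh fh] kernelD(3)[OF k] by simp
  also have "\<dots> = zr C T (cd C f)" using zero_comp[OF x] hom_ob(2)[OF fh] by blast
  finally have "\<exists>!u. u \<in> hom C T (dm C k) \<and> k \<cdot> u = k \<cdot> x"
    by (rule kernel_lift[OF k comp_hom[OF x kh]])
  then show ?thesis using x y eq by (metis the1_equality)
qed

lemma kernelI:
  assumes "k \<in> hom C K X" "f \<in> hom C X Y" "f \<cdot> k = zr C K Y"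
    and "\<And>T t. t \<in> hom C T X \<Longrightarrow> f \<cdot> t = zr C T Y \<Longrightarrow> \<exists>!u. u \<in> hom C T K \<and> k \<cdot> u = t"
  shows "is_kernel C k f"
  unfolding is_kernel_def
proof (intro conjI ballI impI)
  show "k \<in> ar C" "f \<in> ar C" "cd C k = dm C f" "f \<cdot> k = zr C (dm C k) (cd C f)"
    using assms(1-3) by (simp_all add: hom_def)
  fix t assume "t \<in> ar C" "cd C t = dm C f \<and> f \<cdot> t = zr C (dm C t) (cd C f)"
  then have "t \<in> hom C (dm C t) X" "f \<cdot> t = zr C (dm C t) Y"
    using assms(2) by (simp_all add: hom_def)
  from assms(4)[OF this] show "\<exists>!u. u \<in> hom C (dm C t) (dm C k) \<and> k \<cdot> u = t"
    using assms(1) by (simp add: hom_def)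
qed

lemma cokernelD:
  assumes "is_cokernel C c f"
  shows "c \<in> hom C (cd C f) (cd C c)" "f \<in> hom C (dm C f) (cd C f)"
    "c \<cdot> f = zr C (dm C f) (cd C c)"
  using assms by (simp_all add: is_cokernel_def hom_def)

lemma cokernel_desc:
  assumes "is_cokernel C c f" "t \<in> hom C (cd C f) T" "t \<cdot> f = zr C (dm C f) T"
  shows "\<exists>!u. u \<in> hom C (cd C c) T \<and> u \<cdot> c = t"
proof -
  have t: "t \<in> ar C" "dm C t = cd C f" "cd C t = T" using assms(2) by (simp_all add: hom_def)
  have "\<forall>t \<in> ar C. dm C t = cd C f \<and> t \<cdot> f = zr C (dm C f) (cd C t) \<longrightarrow>
      (\<exists>!u. u \<in> hom C (cd C c) (cd C t) \<and> u \<cdot> c = t)"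
    using assms(1) unfolding is_cokernel_def by (elim conjE)
  from this[rule_format, OF t(1)] show ?thesis using t assms(3) by simp
qed

lemma cokernel_epi:
  assumes c: "is_cokernel C c f" and x: "x \<in> hom C (cd C c) T" and y: "y \<in> hom C (cd C c) T"
    and eq: "x \<cdot> c = y \<cdot> c"
  shows "x = y"
proof -
  have ch: "c \<in> hom C (cd C f) (cd C c)" and fh: "f \<in> hom C (dm C f) (cd C f)"
    using c cokernelD(1) cokernelD(2) by blast+
  have "(x \<cdot> c) \<cdot> f = x \<cdot> zr C (dm C f) (cd C c)"
    using comp_assoc[OF fh ch x] cokernelD(3)[OF c] by simp
  also have "\<dots> = zr C (dm C f) T" using comp_zero[OF x] hom_ob(1)[OF fh] by blast
  finally have "\<exists>!u. u \<in> hom C (cd C c) T \<and> u \<cdot> c = x \<cdot> c"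
    by (rule cokernel_desc[OF c comp_hom[OF ch x]])
  then show ?thesis using x y eq by (metis the1_equality)
qed

lemma cokernelI:
  assumes "c \<in> hom C Y Q" "f \<in> hom C X Y" "c \<cdot> f = zr C X Q"
    and "\<And>T t. t \<in> hom C Y T \<Longrightarrow> t \<cdot> f = zr C X T \<Longrightarrow> \<exists>!u. u \<in> hom C Q T \<and> u \<cdot> c = t"
  shows "is_cokernel C c f"
  unfolding is_cokernel_def
proof (intro conjI ballI impI)
  show "c \<in> ar C" "f \<in> ar C" "dm C c = cd C f" "c \<cdot> f = zr C (dm C f) (cd C c)"
    using assms(1-3) by (simp_all add: hom_def)
  fix t assume "t \<in> ar C" "dm C t = cd C f \<and> t \<cdot> f = zr C (dm C f) (cd C t)"
  then have "t \<in> hom C Y (cd C t)" "t \<cdot> f = zr C X (cd C t)"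
    using assms(2) by (simp_all add: hom_def)
  from assms(4)[OF this] show "\<exists>!u. u \<in> hom C (cd C c) (cd C t) \<and> u \<cdot> c = t"
    using assms(1) by (simp add: hom_def)
qed

lemma kernels_isomorphic:
  assumes k: "is_kernel C k f" and k': "is_kernel C k' f"
  shows "isomorphic C (dm C k) (dm C k')"
proof -
  have kh: "k \<in> hom C (dm C k) (dm C f)" and k'h: "k' \<in> hom C (dm C k') (dm C f)"
    using k k' kernelD(1) by blast+
  obtain \<phi> where \<phi>: "\<phi> \<in> hom C (dm C k) (dm C k')" "k' \<cdot> \<phi> = k"
    using kernel_lift[OF k' kh] kernelD(3)[OF k] by blast
  obtain \<psi> where \<psi>: "\<psi> \<in> hom C (dm C k') (dm C k)" "k \<cdot> \<psi> = k'"
    using kernel_lift[OF k k'h] kernelD(3)[OF k'] by blast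
  have "k \<cdot> (\<psi> \<cdot> \<phi>) = k \<cdot> idt C (dm C k)"
    using comp_assoc[OF \<phi>(1) \<psi>(1) kh] \<phi>(2) \<psi>(2) id_right[OF kh] by simp
  then have "\<psi> \<cdot> \<phi> = idt C (dm C k)"
    using kernel_mono[OF k] \<phi>(1) \<psi>(1) id_hom hom_ob(1)[OF kh] by blast
  moreover have "k' \<cdot> (\<phi> \<cdot> \<psi>) = k' \<cdot> idt C (dm C k')"
    using comp_assoc[OF \<psi>(1) \<phi>(1) k'h] \<phi>(2) \<psi>(2) id_right[OF k'h] by simp
  then have "\<phi> \<cdot> \<psi> = idt C (dm C k')"
    using kernel_mono[OF k'] \<phi>(1) \<psi>(1) id_hom hom_ob(1)[OF k'h] by blast
  ultimately show ?thesis using \<phi>(1) \<psi>(1) unfolding isomorphic_def by blast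
qed

lemma cokernels_isomorphic:
  assumes c: "is_cokernel C c f" and c': "is_cokernel C c' f"
  shows "isomorphic C (cd C c) (cd C c')"
proof -
  have ch: "c \<in> hom C (cd C f) (cd C c)" and c'h: "c' \<in> hom C (cd C f) (cd C c')"
    using c c' cokernelD(1) by blast+
  obtain \<phi> where \<phi>: "\<phi> \<in> hom C (cd C c) (cd C c')" "\<phi> \<cdot> c = c'"
    using cokernel_desc[OF c c'h] cokernelD(3)[OF c'] by blast
  obtain \<psi> where \<psi>: "\<psi> \<in> hom C (cd C c') (cd C c)" "\<psi> \<cdot> c' = c"
    using cokernel_desc[OF c' ch] cokernelD(3)[OF c] by blast
  have "(\<psi> \<cdot> \<phi>) \<cdot> c = idt C (cd C c) \<cdot> c"
    using comp_assoc[OF ch \<phi>(1) \<psi>(1)] \<phi>(2) \<psi>(2) id_left[OF ch] by simp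
  then have "\<psi> \<cdot> \<phi> = idt C (cd C c)"
    using cokernel_epi[OF c] \<phi>(1) \<psi>(1) id_hom hom_ob(2)[OF ch] by blast
  moreover have "(\<phi> \<cdot> \<psi>) \<cdot> c' = idt C (cd C c') \<cdot> c'"
    using comp_assoc[OF c'h \<psi>(1) \<phi>(1)] \<phi>(2) \<psi>(2) id_left[OF c'h] by simp
  then have "\<phi> \<cdot> \<psi> = idt C (cd C c')"
    using cokernel_epi[OF c'] \<phi>(1) \<psi>(1) id_hom hom_ob(2)[OF c'h] by blast
  ultimately show ?thesis using \<phi>(1) \<psi>(1) unfolding isomorphic_def by blast
qed

lemma pushoutD:
  assumes "is_pushout C f g P f' g'"
  shows "f \<in> hom C (dm C f) (cd C f)" "g \<in> hom C (dm C f) (cd C g)"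
    "f' \<in> hom C (cd C g) P" "g' \<in> hom C (cd C f) P" "f' \<cdot> g = g' \<cdot> f"
  using assms unfolding is_pushout_def hom_def by (elim conjE; simp)+

lemma pushout_univ:
  assumes "is_pushout C f g P f' g'"
    and "u \<in> hom C (cd C g) Z" "v \<in> hom C (cd C f) Z" "u \<cdot> g = v \<cdot> f"
  shows "\<exists>!w. w \<in> hom C P Z \<and> w \<cdot> f' = u \<and> w \<cdot> g' = v"
proof -
  have "\<forall>Z \<in> ob C. \<forall>u \<in> hom C (cd C g) Z. \<forall>v \<in> hom C (cd C f) Z.
      u \<cdot> g = v \<cdot> f \<longrightarrow> (\<exists>!w. w \<in> hom C P Z \<and> w \<cdot> f' = u \<and> w \<cdot> g' = v)"
    using assms(1) unfolding is_pushout_def by (elim conjE)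
  from this[rule_format, OF hom_ob(2)[OF assms(2)] assms(2-4)] show ?thesis .
qed

lemma pushout_cancel:
  assumes po: "is_pushout C f g P f' g'" and w: "w \<in> hom C P Z" "w' \<in> hom C P Z"
    and "w \<cdot> f' = w' \<cdot> f'" "w \<cdot> g' = w' \<cdot> g'"
  shows "w = w'"
proof -
  note D = pushoutD[OF po]
  have "(w' \<cdot> f') \<cdot> g = (w' \<cdot> g') \<cdot> f"
    using comp_assoc[OF D(2) D(3) w(2)] comp_assoc[OF D(1) D(4) w(2)] D(5) by simp
  then have "\<exists>!x. x \<in> hom C P Z \<and> x \<cdot> f' = w' \<cdot> f' \<and> x \<cdot> g' = w' \<cdot> g'"
    by (rule pushout_univ[OF po comp_hom[OF D(3) w(2)] comp_hom[OF D(4) w(2)]])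
  then show ?thesis using assms by (metis the1_equality)
qed

lemma pushoutI:
  assumes f: "f \<in> hom C X Y" and g: "g \<in> hom C X A" and "P \<in> ob C"
    and "f' \<in> hom C A P" "g' \<in> hom C Y P" "f' \<cdot> g = g' \<cdot> f"
    and desc: "\<And>Z u v. u \<in> hom C A Z \<Longrightarrow> v \<in> hom C Y Z \<Longrightarrow> u \<cdot> g = v \<cdot> f \<Longrightarrow>
      \<exists>w \<in> hom C P Z. w \<cdot> f' = u \<and> w \<cdot> g' = v"
    and cancel: "\<And>Z w w'. w \<in> hom C P Z \<Longrightarrow> w' \<in> hom C P Z \<Longrightarrow>
      w \<cdot> f' = w' \<cdot> f' \<Longrightarrow> w \<cdot> g' = w' \<cdot> g' \<Longrightarrow> w = w'"
  shows "is_pushout C f g P f' g'"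
  unfolding is_pushout_def
proof (intro conjI ballI impI)
  show "f \<in> ar C" "g \<in> ar C" "dm C f = dm C g" "P \<in> ob C" "f' \<in> hom C (cd C g) P"
    "g' \<in> hom C (cd C f) P" "f' \<cdot> g = g' \<cdot> f"
    using assms(1-6) by (simp_all add: hom_def)
  fix Z u v assume "Z \<in> ob C" "u \<in> hom C (cd C g) Z" "v \<in> hom C (cd C f) Z" "u \<cdot> g = v \<cdot> f"
  then have "u \<in> hom C A Z" "v \<in> hom C Y Z" "u \<cdot> g = v \<cdot> f" using f g by (simp_all add: hom_def)
  then show "\<exists>!w. w \<in> hom C P Z \<and> w \<cdot> f' = u \<and> w \<cdot> g' = v"
    using desc cancel by (metis (no_types, lifting))
qed

lemma pushout_sym:
  assumes po: "is_pushout C f g P f' g'" shows "is_pushout C g f P g' f'"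
proof -
  note D = pushoutD[OF po]
  show ?thesis
  proof (rule pushoutI[OF D(2) D(1) _ D(4) D(3) D(5)[symmetric]])
    show "P \<in> ob C" using hom_ob(2)[OF D(3)] .
    fix Z u v assume "u \<in> hom C (cd C f) Z" "v \<in> hom C (cd C g) Z" "u \<cdot> f = v \<cdot> g"
    then show "\<exists>w \<in> hom C P Z. w \<cdot> g' = u \<and> w \<cdot> f' = v"
      using pushout_univ[OF po, of v Z u] by auto
  next
    fix Z w w' assume "w \<in> hom C P Z" "w' \<in> hom C P Z" "w \<cdot> g' = w' \<cdot> g'" "w \<cdot> f' = w' \<cdot> f'"
    then show "w = w'" using pushout_cancel[OF po] by blast
  qed
qed

lemma pushout_paste:
  assumes po1: "is_pushout C p g P1 r h" and po2: "is_pushout C i h P r' h'"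
  shows "is_pushout C (i \<cdot> p) g P (r' \<cdot> r) h'"
proof -
  note D1 = pushoutD[OF po1] and D2 = pushoutD[OF po2]
  have I: "dm C i = cd C p" and P1: "cd C h = P1" using D1(4) D2(2) by (simp_all add: hom_def)
  have p: "p \<in> hom C (dm C p) (cd C p)" and g: "g \<in> hom C (dm C p) (cd C g)"
    and r: "r \<in> hom C (cd C g) P1" and h: "h \<in> hom C (cd C p) P1"
    and i: "i \<in> hom C (cd C p) (cd C i)" and r': "r' \<in> hom C P1 P" and h': "h' \<in> hom C (cd C i) P"
    using D1 D2 I P1 by simp_all
  have ip: "i \<cdot> p \<in> hom C (dm C p) (cd C i)" using p i by blast
  have comm: "(r' \<cdot> r) \<cdot> g = h' \<cdot> (i \<cdot> p)"
  proof -
    have "(r' \<cdot> r) \<cdot> g = r' \<cdot> (h \<cdot> p)" using comp_assoc[OF g r r'] D1(5) by simp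
    also have "\<dots> = (h' \<cdot> i) \<cdot> p" using comp_assoc[OF p h r'] D2(5) by simp
    finally show ?thesis using comp_assoc[OF p i h'] by simp
  qed
  show ?thesis
  proof (rule pushoutI[OF ip g hom_ob(2)[OF r'] comp_hom[OF r r'] h' comm])
    fix Z u v assume u: "u \<in> hom C (cd C g) Z" and v: "v \<in> hom C (cd C i) Z"
      and uv: "u \<cdot> g = v \<cdot> (i \<cdot> p)"
    have "u \<cdot> g = (v \<cdot> i) \<cdot> p" using uv comp_assoc[OF p i v] by simp
    then obtain w1 where w1: "w1 \<in> hom C P1 Z" "w1 \<cdot> r = u" "w1 \<cdot> h = v \<cdot> i"
      using pushout_univ[OF po1 u comp_hom[OF i v]] by auto
    then obtain w where w: "w \<in> hom C P Z" "w \<cdot> r' = w1" "w \<cdot> h' = v"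
      using pushout_univ[OF po2, of w1 Z v] v P1 I by auto
    then show "\<exists>w \<in> hom C P Z. w \<cdot> (r' \<cdot> r) = u \<and> w \<cdot> h' = v"
      using comp_assoc[OF r r' w(1)] w1(2) by auto
  next
    fix Z w w' assume w: "w \<in> hom C P Z" and w': "w' \<in> hom C P Z"
      and eq1: "w \<cdot> (r' \<cdot> r) = w' \<cdot> (r' \<cdot> r)" and eq2: "w \<cdot> h' = w' \<cdot> h'"
    have "(w \<cdot> r') \<cdot> h = (w' \<cdot> r') \<cdot> h"
      using comp_assoc[OF h r' w] comp_assoc[OF h r' w'] comp_assoc[OF i h' w]
        comp_assoc[OF i h' w'] D2(5) eq2 I by simp
    moreover have "(w \<cdot> r') \<cdot> r = (w' \<cdot> r') \<cdot> r"
      using comp_assoc[OF r r' w] comp_assoc[OF r r' w'] eq1 by simp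
    ultimately have "w \<cdot> r' = w' \<cdot> r'"
      using pushout_cancel[OF po1 comp_hom[OF r' w] comp_hom[OF r' w']] by blast
    then show "w = w'" using pushout_cancel[OF po2 w w'] eq2 by blast
  qed
qed

lemma pushouts_isomorphic:
  assumes po: "is_pushout C f g P f' g'" and po': "is_pushout C f g P' f'' g''"
  shows "isomorphic C P P'"
proof -
  note D = pushoutD[OF po] and D' = pushoutD[OF po']
  obtain \<phi> where \<phi>: "\<phi> \<in> hom C P P'" "\<phi> \<cdot> f' = f''" "\<phi> \<cdot> g' = g''"
    using pushout_univ[OF po D'(3,4,5)] by auto
  obtain \<psi> where \<psi>: "\<psi> \<in> hom C P' P" "\<psi> \<cdot> f'' = f'" "\<psi> \<cdot> g'' = g'"
    using pushout_univ[OF po' D(3,4,5)] by auto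
  have "\<psi> \<cdot> \<phi> = idt C P"
  proof (rule pushout_cancel[OF po comp_hom[OF \<phi>(1) \<psi>(1)] id_hom[OF hom_ob(1)[OF \<phi>(1)]]])
    show "(\<psi> \<cdot> \<phi>) \<cdot> f' = idt C P \<cdot> f'" "(\<psi> \<cdot> \<phi>) \<cdot> g' = idt C P \<cdot> g'"
      using comp_assoc[OF D(3) \<phi>(1) \<psi>(1)] comp_assoc[OF D(4) \<phi>(1) \<psi>(1)] \<phi> \<psi>
        id_left[OF D(3)] id_left[OF D(4)] by simp_all
  qed
  moreover have "\<phi> \<cdot> \<psi> = idt C P'"
  proof (rule pushout_cancel[OF po' comp_hom[OF \<psi>(1) \<phi>(1)] id_hom[OF hom_ob(1)[OF \<psi>(1)]]])
    show "(\<phi> \<cdot> \<psi>) \<cdot> f'' = idt C P' \<cdot> f''" "(\<phi> \<cdot> \<psi>) \<cdot> g'' = idt C P' \<cdot> g''"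
      using comp_assoc[OF D'(3) \<psi>(1) \<phi>(1)] comp_assoc[OF D'(4) \<psi>(1) \<phi>(1)] \<phi> \<psi>
        id_left[OF D'(3)] id_left[OF D'(4)] by simp_all
  qed
  ultimately show ?thesis using \<phi>(1) \<psi>(1) unfolding isomorphic_def by blast
qed

lemma pushout_cokernel:
  assumes po: "is_pushout C i d Q b a" and s: "is_cokernel C s b"
  shows "is_cokernel C (s \<cdot> a) i"
proof -
  note D = pushoutD[OF po]
  have sh: "s \<in> hom C Q (cd C s)" using cokernelD(1)[OF s] D(3) by (simp add: hom_def)
  have sb: "s \<cdot> b = zr C (cd C d) (cd C s)"
    using cokernelD(3)[OF s] D(3) by (simp add: hom_def)
  have S: "cd C s \<in> ob C" using hom_ob(2)[OF sh] .
  show ?thesis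
  proof (rule cokernelI[OF comp_hom[OF D(4) sh] D(1)])
    have "(s \<cdot> a) \<cdot> i = (s \<cdot> b) \<cdot> d"
      using comp_assoc[OF D(1) D(4) sh] comp_assoc[OF D(2) D(3) sh] D(5) by simp
    then show "(s \<cdot> a) \<cdot> i = zr C (dm C i) (cd C s)" using sb zero_comp[OF D(2) S] by simp
  next
    fix T t assume t: "t \<in> hom C (cd C i) T" and ti: "t \<cdot> i = zr C (dm C i) T"
    have T: "T \<in> ob C" using hom_ob(2)[OF t] .
    have "zr C (cd C d) T \<cdot> d = t \<cdot> i" using zero_comp[OF D(2) T] ti by simp
    then obtain w where w: "w \<in> hom C Q T" "w \<cdot> b = zr C (cd C d) T" "w \<cdot> a = t"
      using pushout_univ[OF po zero_hom[OF hom_ob(1)[OF D(3)] T] t] by auto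
    then obtain x where x: "x \<in> hom C (cd C s) T" "x \<cdot> s = w"
      using cokernel_desc[OF s, of w T] D(3) by (auto simp: hom_def)
    have exists: "x \<cdot> (s \<cdot> a) = t" using comp_assoc[OF D(4) sh x(1)] x(2) w(3) by simp
    have unique: "y = x" if y: "y \<in> hom C (cd C s) T" "y \<cdot> (s \<cdot> a) = t" for y
    proof (rule cokernel_epi[OF s])
      show "y \<in> hom C (cd C s) T" "x \<in> hom C (cd C s) T" by (fact y(1), fact x(1))
      show "y \<cdot> s = x \<cdot> s"
      proof (rule pushout_cancel[OF po comp_hom[OF sh y(1)] comp_hom[OF sh x(1)]])
        show "(y \<cdot> s) \<cdot> a = (x \<cdot> s) \<cdot> a"
          using comp_assoc[OF D(4) sh y(1)] comp_assoc[OF D(4) sh x(1)] y(2) exists by simp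
        show "(y \<cdot> s) \<cdot> b = (x \<cdot> s) \<cdot> b"
          using comp_assoc[OF D(3) sh y(1)] comp_assoc[OF D(3) sh x(1)] sb
            comp_zero[OF y(1)] comp_zero[OF x(1)] hom_ob(1)[OF D(3)] by simp
      qed
    qed
    show "\<exists>!u. u \<in> hom C (cd C s) T \<and> u \<cdot> (s \<cdot> a) = t"
      using x(1) exists unique by blast
  qed
qed

lemma biproduct_decompose:
  assumes bp: "is_biproduct C X1 X2 S i1 i2 p1 p2" and w: "w \<in> hom C S Z"
  shows "w = ad C ((w \<cdot> i1) \<cdot> p1) ((w \<cdot> i2) \<cdot> p2)"
proof -
  have i1: "i1 \<in> hom C X1 S" and i2: "i2 \<in> hom C X2 S" and p1: "p1 \<in> hom C S X1"
    and p2: "p2 \<in> hom C S X2" and sum: "ad C (i1 \<cdot> p1) (i2 \<cdot> p2) = idt C S"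
    using bp unfolding is_biproduct_def by blast+
  have "w = w \<cdot> ad C (i1 \<cdot> p1) (i2 \<cdot> p2)" using sum id_right[OF w] by simp
  also have "\<dots> = ad C (w \<cdot> (i1 \<cdot> p1)) (w \<cdot> (i2 \<cdot> p2))"
    using comp_add_left[OF comp_hom[OF p1 i1] comp_hom[OF p2 i2] w] .
  finally show ?thesis using comp_assoc[OF p1 i1 w] comp_assoc[OF p2 i2 w] by simp
qed

lemma biproduct_cancel:
  assumes bp: "is_biproduct C X1 X2 S i1 i2 p1 p2" and "w \<in> hom C S Z" "w' \<in> hom C S Z"
    and "w \<cdot> i1 = w' \<cdot> i1" "w \<cdot> i2 = w' \<cdot> i2"
  shows "w = w'"
  using biproduct_decompose[OF bp assms(2)] biproduct_decompose[OF bp assms(3)] assms(4,5) by simp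

lemma biproduct_copair:
  assumes bp: "is_biproduct C X1 X2 S i1 i2 p1 p2" and u: "u \<in> hom C X1 Z" and v: "v \<in> hom C X2 Z"
  shows "ad C (u \<cdot> p1) (v \<cdot> p2) \<cdot> i1 = u" "ad C (u \<cdot> p1) (v \<cdot> p2) \<cdot> i2 = v"
proof -
  have i1: "i1 \<in> hom C X1 S" and i2: "i2 \<in> hom C X2 S" and p1: "p1 \<in> hom C S X1"
    and p2: "p2 \<in> hom C S X2" and eqs: "p1 \<cdot> i1 = idt C X1" "p2 \<cdot> i2 = idt C X2"
    "p1 \<cdot> i2 = zr C X2 X1" "p2 \<cdot> i1 = zr C X1 X2"
    using bp unfolding is_biproduct_def by blast+
  have X: "X1 \<in> ob C" "X2 \<in> ob C" using i1 i2 hom_ob by blast+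
  have "ad C (u \<cdot> p1) (v \<cdot> p2) \<cdot> i1 = ad C (u \<cdot> (p1 \<cdot> i1)) (v \<cdot> (p2 \<cdot> i1))"
    using comp_add_right[OF i1 comp_hom[OF p1 u] comp_hom[OF p2 v]]
      comp_assoc[OF i1 p1 u] comp_assoc[OF i1 p2 v] by simp
  then show "ad C (u \<cdot> p1) (v \<cdot> p2) \<cdot> i1 = u"
    using eqs id_right[OF u] comp_zero[OF v X(1)] add_zero[OF u] by simp
  have "ad C (u \<cdot> p1) (v \<cdot> p2) \<cdot> i2 = ad C (u \<cdot> (p1 \<cdot> i2)) (v \<cdot> (p2 \<cdot> i2))"
    using comp_add_right[OF i2 comp_hom[OF p1 u] comp_hom[OF p2 v]]
      comp_assoc[OF i2 p1 u] comp_assoc[OF i2 p2 v] by simp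
  then show "ad C (u \<cdot> p1) (v \<cdot> p2) \<cdot> i2 = v"
    using eqs id_right[OF v] comp_zero[OF u X(2)] zero_add[OF v] by simp
qed

lemma biproduct_kernel:
  assumes bp: "is_biproduct C X1 X2 S i1 i2 p1 p2"
  shows "is_kernel C i1 p2"
proof -
  have i1: "i1 \<in> hom C X1 S" and i2: "i2 \<in> hom C X2 S" and p1: "p1 \<in> hom C S X1"
    and p2: "p2 \<in> hom C S X2" and eqs: "p1 \<cdot> i1 = idt C X1" "p2 \<cdot> i1 = zr C X1 X2"
    and sum: "ad C (i1 \<cdot> p1) (i2 \<cdot> p2) = idt C S"
    using bp unfolding is_biproduct_def by blast+
  show ?thesis
  proof (rule kernelI[OF i1 p2 eqs(2)])
    fix T t assume t: "t \<in> hom C T S" and z: "p2 \<cdot> t = zr C T X2"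
    have T: "T \<in> ob C" using hom_ob(1)[OF t] .
    have "t = ad C (i1 \<cdot> p1) (i2 \<cdot> p2) \<cdot> t" using sum id_left[OF t] by simp
    also have "\<dots> = ad C (i1 \<cdot> (p1 \<cdot> t)) (i2 \<cdot> (p2 \<cdot> t))"
      using comp_add_right[OF t comp_hom[OF p1 i1] comp_hom[OF p2 i2]]
        comp_assoc[OF t p1 i1] comp_assoc[OF t p2 i2] by simp
    also have "\<dots> = i1 \<cdot> (p1 \<cdot> t)"
      using z comp_zero[OF i2 T] add_zero[OF comp_hom[OF comp_hom[OF t p1] i1]] by simp
    finally have lift: "i1 \<cdot> (p1 \<cdot> t) = t" by simp
    have "u = p1 \<cdot> t" if "u \<in> hom C T X1" "i1 \<cdot> u = t" for u
      using that comp_assoc[OF that(1) i1 p1] eqs(1) id_left by simp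
    then show "\<exists>!u. u \<in> hom C T X1 \<and> i1 \<cdot> u = t"
      using lift comp_hom[OF t p1] by blast
  qed
qed

lemma biproduct_kills_difference:
  assumes bp: "is_biproduct C Y A S i1 i2 p1 p2" and f: "f \<in> hom C X Y" and g: "g \<in> hom C X A"
    and w: "w \<in> hom C S Z"
  shows "w \<cdot> ad C (i1 \<cdot> f) (i2 \<cdot> ng C g) = zr C X Z \<longleftrightarrow> (w \<cdot> i2) \<cdot> g = (w \<cdot> i1) \<cdot> f"
proof -
  have i1: "i1 \<in> hom C Y S" and i2: "i2 \<in> hom C A S" using bp unfolding is_biproduct_def by blast+
  have n: "ng C g \<in> hom C X A" using g by blast
  have wi1: "w \<cdot> i1 \<in> hom C Y Z" and wi2: "w \<cdot> i2 \<in> hom C A Z" using i1 i2 w by blast+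
  have split: "w \<cdot> ad C (i1 \<cdot> f) (i2 \<cdot> ng C g) = ad C ((w \<cdot> i1) \<cdot> f) ((w \<cdot> i2) \<cdot> ng C g)"
    using comp_add_left[OF comp_hom[OF f i1] comp_hom[OF n i2] w]
      comp_assoc[OF f i1 w] comp_assoc[OF n i2 w] by simp
  have neg: "ad C ((w \<cdot> i2) \<cdot> g) ((w \<cdot> i2) \<cdot> ng C g) = zr C X Z"
    using comp_add_left[OF g n wi2] add_neg[OF g] comp_zero[OF wi2 hom_ob(1)[OF f]] by simp
  show ?thesis
  proof
    assume "w \<cdot> ad C (i1 \<cdot> f) (i2 \<cdot> ng C g) = zr C X Z"
    then have "ad C ((w \<cdot> i2) \<cdot> g) ((w \<cdot> i2) \<cdot> ng C g) = ad C ((w \<cdot> i1) \<cdot> f) ((w \<cdot> i2) \<cdot> ng C g)"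
      using split neg by simp
    then show "(w \<cdot> i2) \<cdot> g = (w \<cdot> i1) \<cdot> f"
      by (rule add_right_cancel[OF comp_hom[OF g wi2] comp_hom[OF f wi1] comp_hom[OF n wi2]])
  next
    assume "(w \<cdot> i2) \<cdot> g = (w \<cdot> i1) \<cdot> f"
    then show "w \<cdot> ad C (i1 \<cdot> f) (i2 \<cdot> ng C g) = zr C X Z" using split neg by simp
  qed
qed

lemma pushout_of_biproduct_cokernel:
  assumes bp: "is_biproduct C Y A S i1 i2 p1 p2" and f: "f \<in> hom C X Y" and g: "g \<in> hom C X A"
    and q: "is_cokernel C q (ad C (i1 \<cdot> f) (i2 \<cdot> ng C g))"
  shows "is_pushout C f g (cd C q) (q \<cdot> i2) (q \<cdot> i1)"
proof -
  define P where "P = cd C q"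
  have i1: "i1 \<in> hom C Y S" and i2: "i2 \<in> hom C A S" and p1: "p1 \<in> hom C S Y"
    and p2: "p2 \<in> hom C S A"
    using bp unfolding is_biproduct_def by blast+
  have \<phi>: "ad C (i1 \<cdot> f) (i2 \<cdot> ng C g) \<in> hom C X S" using f g i1 i2 by blast
  have qh: "q \<in> hom C S P" using cokernelD(1)[OF q] \<phi> unfolding P_def by (simp add: hom_def)
  show ?thesis unfolding P_def[symmetric]
  proof (rule pushoutI[OF f g hom_ob(2)[OF qh] comp_hom[OF i2 qh] comp_hom[OF i1 qh]])
    show "(q \<cdot> i2) \<cdot> g = (q \<cdot> i1) \<cdot> f"
      using biproduct_kills_difference[OF bp f g qh] cokernelD(3)[OF q] \<phi>
      unfolding P_def by (simp add: hom_def)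
  next
    fix Z u v assume u: "u \<in> hom C A Z" and v: "v \<in> hom C Y Z" and uv: "u \<cdot> g = v \<cdot> f"
    define \<rho> where "\<rho> = ad C (v \<cdot> p1) (u \<cdot> p2)"
    have \<rho>: "\<rho> \<in> hom C S Z" unfolding \<rho>_def using p1 p2 u v by blast
    have \<rho>i: "\<rho> \<cdot> i1 = v" "\<rho> \<cdot> i2 = u" unfolding \<rho>_def using biproduct_copair[OF bp v u] by simp_all
    then have "\<rho> \<cdot> ad C (i1 \<cdot> f) (i2 \<cdot> ng C g) = zr C X Z"
      using biproduct_kills_difference[OF bp f g \<rho>] uv by simp
    then obtain w where w: "w \<in> hom C P Z" "w \<cdot> q = \<rho>"
      using cokernel_desc[OF q, of \<rho> Z] \<rho> \<phi> unfolding P_def by (auto simp: hom_def)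
    then show "\<exists>w \<in> hom C P Z. w \<cdot> (q \<cdot> i2) = u \<and> w \<cdot> (q \<cdot> i1) = v"
      using comp_assoc[OF i1 qh w(1)] comp_assoc[OF i2 qh w(1)] \<rho>i by auto
  next
    fix Z w w' assume w: "w \<in> hom C P Z" "w' \<in> hom C P Z"
      and eq: "w \<cdot> (q \<cdot> i2) = w' \<cdot> (q \<cdot> i2)" "w \<cdot> (q \<cdot> i1) = w' \<cdot> (q \<cdot> i1)"
    have "w \<cdot> q = w' \<cdot> q"
      using biproduct_cancel[OF bp comp_hom[OF qh w(1)] comp_hom[OF qh w(2)]] eq
        comp_assoc[OF i1 qh w(1)] comp_assoc[OF i2 qh w(1)]
        comp_assoc[OF i1 qh w(2)] comp_assoc[OF i2 qh w(2)] by simp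
    then show "w = w'" using cokernel_epi[OF q] w unfolding P_def by blast
  qed
qed

end

locale conflation_cat =
  fixes C :: "('o, 'm, 'x) cat_scheme" and E :: "('m \<times> 'm) set"
  assumes conflation: "conflation_category C E"

sublocale conflation_cat \<subseteq> preadditive_cat C
  using conflation by unfold_locales (simp add: conflation_category_def is_additive_def)

context conflation_cat
begin

lemma conflation_kernel: "(i, p) \<in> E \<Longrightarrow> is_kernel C i p"
  using conflation unfolding conflation_category_def is_kernel_cokernel_pair_def by blast

lemma conflation_cokernel: "(i, p) \<in> E \<Longrightarrow> is_cokernel C p i"
  using conflation unfolding conflation_category_def is_kernel_cokernel_pair_def by blast

lemma deflation_hom: "deflation E p \<Longrightarrow> p \<in> hom C (dm C p) (cd C p)"
  unfolding deflation_def using conflation_cokernel by (auto simp: is_cokernel_def hom_def)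

lemma inflation_hom: "inflation E i \<Longrightarrow> i \<in> hom C (dm C i) (cd C i)"
  unfolding inflation_def using conflation_kernel by (auto simp: is_kernel_def hom_def)

lemma inflation_comp_deflation_hom:
  assumes "deflation E e" "inflation E m" "cd C e = dm C m"
  shows "m \<cdot> e \<in> hom C (dm C e) (cd C m)"
proof -
  have "e \<in> hom C (dm C e) (dm C m)" using deflation_hom[OF assms(1)] assms(3) by simp
  then show ?thesis using inflation_hom[OF assms(2)] by blast
qed

lemma deflation_epi:
  assumes "deflation E p" "x \<in> hom C (cd C p) Z" "y \<in> hom C (cd C p) Z" "x \<cdot> p = y \<cdot> p"
  shows "x = y"
  using assms conflation_cokernel cokernel_epi unfolding deflation_def by blast

lemma inflation_mono:
  assumes "inflation E i" "x \<in> hom C Z (dm C i)" "y \<in> hom C Z (dm C i)" "i \<cdot> x = i \<cdot> y"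
  shows "x = y"
  using assms conflation_kernel kernel_mono unfolding inflation_def by blast

lemma biproduct_exists:
  assumes "X1 \<in> ob C" "X2 \<in> ob C"
  shows "\<exists>S i1 i2 p1 p2. is_biproduct C X1 X2 S i1 i2 p1 p2"
proof -
  have "has_biproducts C" using conflation by (simp add: conflation_category_def is_additive_def)
  from this[unfolded has_biproducts_def, rule_format, OF assms]
  obtain S i1 i2 p1 p2 where "i1 \<in> hom C X1 S" "i2 \<in> hom C X2 S" "p1 \<in> hom C S X1"
    "p2 \<in> hom C S X2" "p1 \<cdot> i1 = idt C X1" "p2 \<cdot> i2 = idt C X2" "p1 \<cdot> i2 = zr C X2 X1"
    "p2 \<cdot> i1 = zr C X1 X2" "ad C (i1 \<cdot> p1) (i2 \<cdot> p2) = idt C S"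
    by blast
  then show ?thesis unfolding is_biproduct_def by blast
qed

lemma cokernel_comp_deflation:
  assumes c: "is_cokernel C c m" and e: "deflation E e" "cd C e = dm C m"
  shows "is_cokernel C c (m \<cdot> e)"
proof -
  have m: "m \<in> hom C (dm C m) (cd C m)" and ch: "c \<in> hom C (cd C m) (cd C c)"
    using cokernelD(2)[OF c] cokernelD(1)[OF c] .
  have eh: "e \<in> hom C (dm C e) (dm C m)" using deflation_hom[OF e(1)] e(2) by simp
  show ?thesis
  proof (rule cokernelI[OF ch comp_hom[OF eh m]])
    show "c \<cdot> (m \<cdot> e) = zr C (dm C e) (cd C c)"
      using comp_assoc[OF eh m ch] cokernelD(3)[OF c] zero_comp[OF eh hom_ob(2)[OF ch]]
      by simp
  next
    fix T t assume t: "t \<in> hom C (cd C m) T" and z: "t \<cdot> (m \<cdot> e) = zr C (dm C e) T"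
    have "(t \<cdot> m) \<cdot> e = zr C (dm C m) T \<cdot> e"
      using comp_assoc[OF eh m t] z zero_comp[OF eh hom_ob(2)[OF t]] by simp
    then have "t \<cdot> m = zr C (dm C m) T"
      using deflation_epi[OF e(1)] comp_hom[OF m t] zero_hom[OF hom_ob(1)[OF m] hom_ob(2)[OF t]]
        e(2) by simp
    then show "\<exists>!u. u \<in> hom C (cd C c) T \<and> u \<cdot> c = t"
      by (rule cokernel_desc[OF c t])
  qed
qed

lemma kernel_comp_inflation:
  assumes k: "is_kernel C k e" and m: "inflation E m" "cd C e = dm C m"
  shows "is_kernel C k (m \<cdot> e)"
proof -
  have e: "e \<in> hom C (dm C e) (dm C m)" and kh: "k \<in> hom C (dm C k) (dm C e)"
    using kernelD(2)[OF k] kernelD(1)[OF k] m(2) by simp_all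
  have mh: "m \<in> hom C (dm C m) (cd C m)" using inflation_hom[OF m(1)] .
  show ?thesis
  proof (rule kernelI[OF kh comp_hom[OF e mh]])
    show "(m \<cdot> e) \<cdot> k = zr C (dm C k) (cd C m)"
      using comp_assoc[OF kh e mh] kernelD(3)[OF k] m(2) comp_zero[OF mh hom_ob(1)[OF kh]]
      by simp
  next
    fix T t assume t: "t \<in> hom C T (dm C e)" and z: "(m \<cdot> e) \<cdot> t = zr C T (cd C m)"
    have "m \<cdot> (e \<cdot> t) = m \<cdot> zr C T (dm C m)"
      using comp_assoc[OF t e mh] z comp_zero[OF mh hom_ob(1)[OF t]] by simp
    then have "e \<cdot> t = zr C T (dm C m)"
      using inflation_mono[OF m(1)] comp_hom[OF t e] zero_hom[OF hom_ob(1)[OF t] hom_ob(1)[OF mh]]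
      by simp
    then show "\<exists>!u. u \<in> hom C T (dm C k) \<and> k \<cdot> u = t"
      using kernel_lift[OF k t] m(2) by simp
  qed
qed

lemma conflation_transport:
  assumes kp: "(k, p) \<in> E" and \<phi>: "\<phi> \<in> hom C (cd C k) M" and \<psi>: "\<psi> \<in> hom C M (cd C k)"
    and inv: "\<psi> \<cdot> \<phi> = idt C (cd C k)" "\<phi> \<cdot> \<psi> = idt C M"
  shows "(\<phi> \<cdot> k, p \<cdot> \<psi>) \<in> E"
proof -
  have k: "k \<in> hom C (dm C k) (cd C k)" and p: "p \<in> hom C (cd C k) (cd C p)"
    using conflation_kernel[OF kp] by (simp_all add: is_kernel_def hom_def)
  have K: "dm C k \<in> ob C" and Q: "cd C p \<in> ob C" using k p hom_ob by blast+
  have closed: "\<forall>(i, p) \<in> E. \<forall>i' \<in> ar C. \<forall>p' \<in> ar C. \<forall>a b c.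
        cd C i' = dm C p' \<and>
        is_iso C a \<and> dm C a = dm C i \<and> cd C a = dm C i' \<and>
        is_iso C b \<and> dm C b = cd C i \<and> cd C b = cd C i' \<and>
        is_iso C c \<and> dm C c = cd C p \<and> cd C c = cd C p' \<and>
        cp C i' a = cp C b i \<and> cp C p' b = cp C c p \<longrightarrow> (i', p') \<in> E"
    using conflation unfolding conflation_category_def by (elim conjE)
  have i': "\<phi> \<cdot> k \<in> hom C (dm C k) M" and p': "p \<cdot> \<psi> \<in> hom C M (cd C p)"
    using k \<phi> p \<psi> by blast+
  have id_iso: "is_iso C (idt C X)" if "X \<in> ob C" for X
    using is_isoI[OF id_hom[OF that] id_hom[OF that]] id_left[OF id_hom[OF that]] by simp
  have "(p \<cdot> \<psi>) \<cdot> \<phi> = idt C (cd C p) \<cdot> p"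
    using comp_assoc[OF \<phi> \<psi> p] inv(1) id_right[OF p] id_left[OF p] by simp
  moreover have "(\<phi> \<cdot> k) \<cdot> idt C (dm C k) = \<phi> \<cdot> k" using id_right[OF i'] .
  ultimately show ?thesis
    using i' p' \<phi> id_iso[OF K] id_iso[OF Q] is_isoI[OF \<phi> \<psi> inv] id_hom[OF K] id_hom[OF Q]
    by (intro bspec[OF closed kp, unfolded prod.case, rule_format,
          of "\<phi> \<cdot> k" "p \<cdot> \<psi>" "idt C (dm C k)" \<phi> "idt C (cd C p)"])
      (simp_all add: hom_def)
qed

end

locale percolating_subcat = conflation_cat +
  fixes \<A>
  assumes percolating: "adm_defl_percolating C E \<A>"
begin

lemma in_ob: "X \<in> \<A> \<Longrightarrow> X \<in> ob C"
  using percolating unfolding adm_defl_percolating_def by blast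

lemma conflation_middle_in: "(i, p) \<in> E \<Longrightarrow> cd C i \<in> \<A> \<longleftrightarrow> dm C i \<in> \<A> \<and> cd C p \<in> \<A>"
  using percolating unfolding adm_defl_percolating_def by blast

lemma deflation_inflation_factorisation:
  "c \<in> ar C \<Longrightarrow> cd C c \<in> \<A> \<Longrightarrow>
   \<exists>p i. deflation E p \<and> inflation E i \<and> cd C p = dm C i \<and> dm C i \<in> \<A> \<and> c = i \<cdot> p"
  using percolating unfolding adm_defl_percolating_def by blast

lemma pushout_inflation_along_deflation:
  "inflation E a \<Longrightarrow> deflation E b \<Longrightarrow> dm C a = dm C b \<Longrightarrow> cd C b \<in> \<A> \<Longrightarrow>
   \<exists>P b' a'. is_pushout C a b P b' a' \<and> deflation E a' \<and> inflation E b'"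
  using percolating unfolding adm_defl_percolating_def by blast

(* Factorising the identity of X by (A2) yields a conflation through X; transported along the
   isomorphism it passes through Y, and (A1) applies to both. *)
lemma isomorphic_in:
  assumes X: "X \<in> \<A>" and iso: "isomorphic C X Y"
  shows "Y \<in> \<A>"
proof -
  obtain \<phi> \<psi> where \<phi>: "\<phi> \<in> hom C X Y" and \<psi>: "\<psi> \<in> hom C Y X"
    and inv: "\<psi> \<cdot> \<phi> = idt C X" "\<phi> \<cdot> \<psi> = idt C Y"
    using iso unfolding isomorphic_def by blast
  have idX: "idt C X \<in> hom C X X" using id_hom[OF in_ob[OF X]] .
  obtain p i where p: "deflation E p" and i: "inflation E i" "cd C p = dm C i"
    and fac: "idt C X = i \<cdot> p"
    using deflation_inflation_factorisation[of "idt C X"] idX X by (auto simp: hom_def)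
  obtain k where kp: "(k, p) \<in> E" using p unfolding deflation_def by blast
  have "dm C p = X"
    using inflation_comp_deflation_hom[OF p i] idX fac by (simp add: hom_def)
  then have k: "k \<in> hom C (dm C k) X" and pX: "p \<in> hom C X (cd C p)"
    using conflation_kernel[OF kp] deflation_hom[OF p] by (simp_all add: is_kernel_def hom_def)
  then have E': "(\<phi> \<cdot> k, p \<cdot> \<psi>) \<in> E"
    using conflation_transport[OF kp] \<phi> \<psi> inv by (simp add: hom_def)
  have "dm C k \<in> \<A>" "cd C p \<in> \<A>" using conflation_middle_in[OF kp] X k by (simp_all add: hom_def)
  moreover have "dm C (\<phi> \<cdot> k) = dm C k" "cd C (\<phi> \<cdot> k) = Y" "cd C (p \<cdot> \<psi>) = cd C p"
    using comp_hom[OF k \<phi>] comp_hom[OF \<psi> pX] k by (simp_all add: hom_def)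
  ultimately show ?thesis using conflation_middle_in[OF E'] by simp
qed

lemma cokernel_in_cokernel:
  assumes "cokernel_in C \<A> f" "is_cokernel C c f" shows "cd C c \<in> \<A>"
  using assms cokernels_isomorphic isomorphic_in unfolding cokernel_in_def by blast

lemma cokernel_exists_in:
  assumes h: "h \<in> hom C X Y" and Y: "Y \<in> \<A>"
  shows "\<exists>c. is_cokernel C c h \<and> cd C c \<in> \<A>"
proof -
  obtain e m where e: "deflation E e" and m: "inflation E m" "cd C e = dm C m"
    and fac: "h = m \<cdot> e"
    using deflation_inflation_factorisation[of h] h Y by (auto simp: hom_def)
  obtain c where mc: "(m, c) \<in> E" using m(1) unfolding inflation_def by blast
  have "cd C m = Y"
    using inflation_comp_deflation_hom[OF e m(1,2)] h fac m(2) by (simp add: hom_def)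
  then have "cd C c \<in> \<A>" using conflation_middle_in[OF mc] Y by simp
  moreover have "is_cokernel C c h"
    using cokernel_comp_deflation[OF conflation_cokernel[OF mc] e m(2)] fac by simp
  ultimately show ?thesis by blast
qed

(* (A1) for the conflation of the deflation part of p2, whose kernel is i1 up to isomorphism. *)
lemma biproduct_in:
  assumes bp: "is_biproduct C X1 X2 S i1 i2 p1 p2" and X: "X1 \<in> \<A>" "X2 \<in> \<A>"
  shows "S \<in> \<A>"
proof -
  have p2: "p2 \<in> hom C S X2" using bp unfolding is_biproduct_def by blast
  obtain e m where e: "deflation E e" and m: "inflation E m" "cd C e = dm C m" "dm C m \<in> \<A>"
    and fac: "p2 = m \<cdot> e"
    using deflation_inflation_factorisation[of p2] p2 X(2) by (auto simp: hom_def)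
  obtain k where ke: "(k, e) \<in> E" using e unfolding deflation_def by blast
  have "is_kernel C k p2"
    using kernel_comp_inflation[OF conflation_kernel[OF ke] m(1,2)] fac by simp
  then have "dm C k \<in> \<A>"
    using isomorphic_in[OF X(1)] kernels_isomorphic[OF biproduct_kernel[OF bp]]
      biproduct_kernel[OF bp] bp unfolding is_biproduct_def by (auto simp: hom_def)
  moreover have "cd C k = S"
    using conflation_kernel[OF ke] inflation_comp_deflation_hom[OF e m(1,2)] p2 fac m(2)
    by (simp add: is_kernel_def hom_def)
  ultimately show ?thesis using conflation_middle_in[OF ke] m(2,3) by simp
qed

lemma pushout_exists_in:
  assumes f: "f \<in> hom C X Y" and g: "g \<in> hom C X A" and in\<A>: "Y \<in> \<A>" "A \<in> \<A>"
  shows "\<exists>P f' g'. is_pushout C f g P f' g' \<and> P \<in> \<A>"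
proof -
  obtain S i1 i2 p1 p2 where bp: "is_biproduct C Y A S i1 i2 p1 p2"
    using biproduct_exists in_ob in\<A> by blast
  have "ad C (i1 \<cdot> f) (i2 \<cdot> ng C g) \<in> hom C X S"
    using bp f g unfolding is_biproduct_def by blast
  then obtain q where "is_cokernel C q (ad C (i1 \<cdot> f) (i2 \<cdot> ng C g))" "cd C q \<in> \<A>"
    using cokernel_exists_in biproduct_in[OF bp in\<A>] by blast
  then show ?thesis using pushout_of_biproduct_cokernel[OF bp f g] by blast
qed

(* The pushout is the cokernel of g k, where k is the kernel of p. *)
lemma deflation_pushout_in:
  assumes p: "deflation E p" and g: "g \<in> hom C (dm C p) A" and A: "A \<in> \<A>"
  shows "\<exists>P r h. is_pushout C p g P r h \<and> P \<in> \<A>"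
proof -
  obtain k where kp: "(k, p) \<in> E" using p unfolding deflation_def by blast
  have k: "k \<in> hom C (dm C k) (dm C p)" and ph: "p \<in> hom C (dm C p) (cd C p)"
    using conflation_kernel[OF kp] by (simp_all add: is_kernel_def hom_def)
  have K: "dm C k \<in> ob C" using hom_ob(1)[OF k] .
  obtain r where r: "is_cokernel C r (g \<cdot> k)" and r_in: "cd C r \<in> \<A>"
    using cokernel_exists_in[OF comp_hom[OF k g] A] by blast
  define P where "P = cd C r"
  have rh: "r \<in> hom C A P" using cokernelD(1)[OF r] comp_hom[OF k g] by (simp add: P_def hom_def)
  have "(r \<cdot> g) \<cdot> k = zr C (dm C k) P"
    using comp_assoc[OF k g rh] cokernelD(3)[OF r] comp_hom[OF k g] by (simp add: P_def hom_def)
  then obtain h where h: "h \<in> hom C (cd C p) P" "h \<cdot> p = r \<cdot> g"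
    using cokernel_desc[OF conflation_cokernel[OF kp], of "r \<cdot> g" P] comp_hom[OF g rh] k
    by (auto simp: hom_def)
  have "is_pushout C p g P r h"
  proof (rule pushoutI[OF ph g hom_ob(2)[OF rh] rh h(1) h(2)[symmetric]])
    fix Z u v assume u: "u \<in> hom C A Z" and v: "v \<in> hom C (cd C p) Z" and uv: "u \<cdot> g = v \<cdot> p"
    have "(u \<cdot> g) \<cdot> k = zr C (dm C k) Z"
      using uv comp_assoc[OF k ph v] conflation_kernel[OF kp] comp_zero[OF v K]
      by (simp add: is_kernel_def)
    then obtain w where w: "w \<in> hom C P Z" "w \<cdot> r = u"
      using cokernel_desc[OF r, of u Z] u comp_assoc[OF k g u] comp_hom[OF k g]
      by (auto simp: P_def hom_def)
    have "(w \<cdot> h) \<cdot> p = v \<cdot> p"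
      using comp_assoc[OF ph h(1) w(1)] h(2) comp_assoc[OF g rh w(1)] w(2) uv by simp
    then have "w \<cdot> h = v" using deflation_epi[OF p comp_hom[OF h(1) w(1)] v] by blast
    then show "\<exists>w \<in> hom C P Z. w \<cdot> r = u \<and> w \<cdot> h = v" using w by blast
  next
    fix Z w w' assume "w \<in> hom C P Z" "w' \<in> hom C P Z" "w \<cdot> r = w' \<cdot> r"
    then show "w = w'" using cokernel_epi[OF r] by (simp add: P_def)
  qed
  then show ?thesis using r_in P_def by blast
qed

(* The new inflation b starts in A, and its cokernel s gives the cokernel s a of i, so (A1) puts
   the pushout in A. *)
lemma inflation_pushout_in:
  assumes i: "inflation E i" and d: "deflation E d" "dm C d = dm C i" "cd C d \<in> \<A>"
    and coker: "cokernel_in C \<A> i"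
  shows "\<exists>Q b a. is_pushout C i d Q b a \<and> Q \<in> \<A>"
proof -
  obtain Q b a where po: "is_pushout C i d Q b a" and b: "inflation E b"
    using pushout_inflation_along_deflation[OF i d(1) d(2)[symmetric] d(3)] by blast
  obtain s where bs: "(b, s) \<in> E" using b unfolding inflation_def by blast
  have b_hom: "dm C b = cd C d" "cd C b = Q" using pushoutD(3)[OF po] by (simp_all add: hom_def)
  have "s \<in> hom C Q (cd C s)" using cokernelD(1)[OF conflation_cokernel[OF bs]] b_hom by simp
  then have "cd C (s \<cdot> a) = cd C s" using comp_hom[OF pushoutD(4)[OF po]] by (simp add: hom_def)
  then have "cd C s \<in> \<A>"
    using cokernel_in_cokernel[OF coker pushout_cokernel[OF po conflation_cokernel[OF bs]]] by simp
  moreover note b_hom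
  ultimately show ?thesis using conflation_middle_in[OF bs] d(3) po by auto
qed

lemma cokernel_in_inflation:
  assumes i: "inflation E i" and p: "deflation E p" "cd C p = dm C i"
    and coker: "cokernel_in C \<A> (i \<cdot> p)"
  shows "cokernel_in C \<A> i"
proof -
  obtain c where ic: "(i, c) \<in> E" using i unfolding inflation_def by blast
  have "cd C c \<in> \<A>"
    using cokernel_in_cokernel[OF coker cokernel_comp_deflation[OF conflation_cokernel[OF ic] p]] .
  then show ?thesis using conflation_cokernel[OF ic] unfolding cokernel_in_def by blast
qed

lemma admissible_pushout_in:
  assumes adm: "admissible C E f" and coker: "cokernel_in C \<A> f"
    and g: "g \<in> hom C (dm C f) A" and A: "A \<in> \<A>"
  shows "\<exists>P f' g'. is_pushout C f g P f' g' \<and> P \<in> \<A>"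
proof -
  obtain p i where p: "deflation E p" and i: "inflation E i" "cd C p = dm C i" and f: "f = i \<cdot> p"
    using adm unfolding admissible_def by blast
  have "g \<in> hom C (dm C p) A" using g inflation_comp_deflation_hom[OF p i] f by (simp add: hom_def)
  then obtain P1 r h where po1: "is_pushout C p g P1 r h" and P1: "P1 \<in> \<A>"
    using deflation_pushout_in[OF p _ A] by blast
  have h: "h \<in> hom C (cd C p) P1" using pushoutD(4)[OF po1] .
  obtain d j where d: "deflation E d" and j: "inflation E j" "cd C d = dm C j" "dm C j \<in> \<A>"
    and hjd: "h = j \<cdot> d"
    using deflation_inflation_factorisation[of h] h P1 by (auto simp: hom_def)
  have jd: "dm C d = cd C p" "cd C j = P1"
    using inflation_comp_deflation_hom[OF d j(1,2)] h hjd by (simp_all add: hom_def)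
  obtain Q b a where po2: "is_pushout C i d Q b a" and Q: "Q \<in> \<A>"
    using inflation_pushout_in[OF i(1) d] jd i(2) j(2,3) cokernel_in_inflation[OF i(1) p i(2)] coker f
    by auto
  have "j \<in> hom C (dm C j) P1" "b \<in> hom C (dm C j) Q"
    using inflation_hom[OF j(1)] pushoutD(3)[OF po2] jd j(2) by simp_all
  then obtain P x y where po3: "is_pushout C j b P x y" and P: "P \<in> \<A>"
    using pushout_exists_in P1 Q by blast
  have "is_pushout C i h P y (x \<cdot> a)"
    using pushout_sym[OF pushout_paste[OF pushout_sym[OF po2] po3]] hjd by simp
  then have "is_pushout C f g P (y \<cdot> r) (x \<cdot> a)"
    using pushout_paste[OF po1] f by simp
  then show ?thesis using P by blast
qed

lemma morphism_in_admissible: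
  assumes f: "f \<in> hom C X Y" and X: "X \<in> \<A>" and Y: "Y \<in> \<A>"
  shows "admissible C E f \<and> kernel_in C \<A> f \<and> cokernel_in C \<A> f"
proof -
  obtain e m where e: "deflation E e" and m: "inflation E m" "cd C e = dm C m" and fac: "f = m \<cdot> e"
    using deflation_inflation_factorisation[of f] f Y by (auto simp: hom_def)
  have em: "dm C e = X" "cd C m = Y"
    using inflation_comp_deflation_hom[OF e m] f fac by (simp_all add: hom_def)
  obtain k where ke: "(k, e) \<in> E" using e unfolding deflation_def by blast
  obtain c where mc: "(m, c) \<in> E" using m(1) unfolding inflation_def by blast
  have "dm C k \<in> \<A>"
    using conflation_middle_in[OF ke] conflation_kernel[OF ke] em(1) X by (simp add: is_kernel_def)
  then have "kernel_in C \<A> f"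
    using kernel_comp_inflation[OF conflation_kernel[OF ke] m] fac unfolding kernel_in_def by blast
  moreover have "cd C c \<in> \<A>" using conflation_middle_in[OF mc] em(2) Y by simp
  then have "cokernel_in C \<A> f"
    using cokernel_comp_deflation[OF conflation_cokernel[OF mc] e m(2)] fac
    unfolding cokernel_in_def by blast
  moreover have "admissible C E f" using e m fac unfolding admissible_def by blast
  ultimately show ?thesis by blast
qed

end

theorem mainTheorem8:
  fixes C :: "('o, 'm, 'x) cat_scheme" and E :: "('m \<times> 'm) set" and A :: "'o set"
  assumes "deflation_exact C E"
    and "adm_defl_percolating C E A"
    and "admissible C E f" and "kernel_in C A f" and "cokernel_in C A f"
    and "g \<in> ar C" and "dm C g = dm C f" and "cd C g \<in> A"
  shows "(\<exists>P f' g'. is_pushout C f g P f' g') \<and>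
         (\<forall>P f' g'. is_pushout C f g P f' g' \<longrightarrow>
            admissible C E f' \<and> kernel_in C A f' \<and> cokernel_in C A f')"
proof -
  interpret percolating_subcat C E A
    using assms(1,2) by unfold_locales (simp_all add: deflation_exact_def)
  have g: "g \<in> hom C (dm C f) (cd C g)" using assms(6,7) by (simp add: hom_def)
  obtain P0 f0 g0 where po0: "is_pushout C f g P0 f0 g0" and P0: "P0 \<in> A"
    using admissible_pushout_in[OF assms(3,5) g assms(8)] by blast
  have "admissible C E f' \<and> kernel_in C A f' \<and> cokernel_in C A f'"
    if po: "is_pushout C f g P f' g'" for P f' g'
    using morphism_in_admissible[OF pushoutD(3)[OF po] assms(8)]
      isomorphic_in[OF P0 pushouts_isomorphic[OF po0 po]] by blast
  then show ?thesis using po0 by blast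
qed

end
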